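(* Let $n\ge3$ and let $u=x_0+h_1x_1+\cdots+h_{n-1}x_{n-1}$ be a polar $n$-complex number with $v_+>0$, with $v_->0$ if $n$ is even, and with $\rho_k>0$ for $k=1,\dots,\lfloor(n-1)/2\rfloor$. Let $\rho=(v_+v_-\rho_1^2\cdots\rho_{n/2-1}^2)^{1/n}$ for even $n$ and $\rho=(v_+\rho_1^2\cdots\rho_{(n-1)/2}^2)^{1/n}$ for odd $n$. Then for even $n$ $$u=\rho\exp\Big\{\sum_{p=1}^{n-1}h_p\Big[\frac1n\ln\frac{\sqrt2}{\tan\theta_+}+\frac{(-1)^p}{n}\ln\frac{\sqrt2}{\tan\theta_-}-\frac2n\sum_{k=2}^{n/2-1}\cos\Big(\frac{2\pi kp}{n}\Big)\ln\tan\psi_{k-1}\Big]+\sum_{k=1}^{n/2-1}\tilde e_k\phi_k\Big\},$$ and for odd $n$ $$u=\rho\exp\Big\{\sum_{p=1}^{n-1}h_p\Big[\frac1n\ln\frac{\sqrt2}{\tan\theta_+}-\frac2n\sum_{k=2}^{(n-1)/2}\cos\Big(\frac{2\pi kp}{n}\Big)\ln\tan\psi_{k-1}\Big]+\sum_{k=1}^{(n-1)/2}\tilde e_k\phi_k\Big\}.$$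
   Context: Polar $n$-complex numbers: $u=x_0+h_1x_1+\cdots+h_{n-1}x_{n-1}$, $x_j\in\mathbb{R}$, $h_0=1$, componentwise addition, bilinear multiplication $h_jh_k=h_{(j+k)\bmod n}$; $\exp w=\sum_{j\ge0}w^j/j!$. Canonical variables: $v_+=\sum_px_p$; for even $n$, $v_-=\sum_p(-1)^px_p$; for $k=1,\dots,\lfloor(n-1)/2\rfloor$, $v_k=\sum_px_p\cos(2\pi kp/n)$, $\tilde v_k=\sum_px_p\sin(2\pi kp/n)$, $\rho_k=\sqrt{v_k^2+\tilde v_k^2}$, $\phi_k\in[0,2\pi)$ with $\cos\phi_k=v_k/\rho_k$, $\sin\phi_k=\tilde v_k/\rho_k$. Angles: $\tan\theta_+=\sqrt2\rho_1/v_+$, $\tan\theta_-=\sqrt2\rho_1/v_-$ (even $n$), $\tan\psi_{k-1}=\rho_1/\rho_k$ for $k=2,\dots,\lfloor(n-1)/2\rfloor$. $\tilde e_k=\frac2n\sum_{p=0}^{n-1}\sin(2\pi kp/n)h_p$. *)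

theory Defs
  imports "HOL-Analysis.Analysis"
begin

text \<open>Polar n-complex numbers are represented by their component functions
  x :: nat \<Rightarrow> real, where only the components x 0, ..., x (n-1) are relevant
  (u = x 0 + h_1 x 1 + ... + h_(n-1) x (n-1)).\<close>

definition pc_mult :: "nat \<Rightarrow> (nat \<Rightarrow> real) \<Rightarrow> (nat \<Rightarrow> real) \<Rightarrow> (nat \<Rightarrow> real)" where
  "pc_mult n u w = (\<lambda>r. if r < n then
      (\<Sum>j<n. \<Sum>k<n. if (j + k) mod n = r then u j * w k else 0) else 0)"

definition pc_one :: "nat \<Rightarrow> real" where
  "pc_one = (\<lambda>r. if r = 0 then 1 else 0)"

primrec pc_pow :: "nat \<Rightarrow> (nat \<Rightarrow> real) \<Rightarrow> nat \<Rightarrow> (nat \<Rightarrow> real)" where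
  "pc_pow n w 0 = pc_one"
| "pc_pow n w (Suc j) = pc_mult n w (pc_pow n w j)"

definition pc_exp :: "nat \<Rightarrow> (nat \<Rightarrow> real) \<Rightarrow> (nat \<Rightarrow> real)" where
  "pc_exp n w = (\<lambda>r. \<Sum>j. pc_pow n w j r / fact j)"

definition v_plus :: "nat \<Rightarrow> (nat \<Rightarrow> real) \<Rightarrow> real" where
  "v_plus n x = (\<Sum>p<n. x p)"

definition v_minus :: "nat \<Rightarrow> (nat \<Rightarrow> real) \<Rightarrow> real" where
  "v_minus n x = (\<Sum>p<n. (-1) ^ p * x p)"

definition v_k :: "nat \<Rightarrow> (nat \<Rightarrow> real) \<Rightarrow> nat \<Rightarrow> real" where
  "v_k n x k = (\<Sum>p<n. x p * cos (2 * pi * real k * real p / real n))"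

definition vt_k :: "nat \<Rightarrow> (nat \<Rightarrow> real) \<Rightarrow> nat \<Rightarrow> real" where
  "vt_k n x k = (\<Sum>p<n. x p * sin (2 * pi * real k * real p / real n))"

definition rho_k :: "nat \<Rightarrow> (nat \<Rightarrow> real) \<Rightarrow> nat \<Rightarrow> real" where
  "rho_k n x k = sqrt ((v_k n x k)\<^sup>2 + (vt_k n x k)\<^sup>2)"

definition phi_k :: "nat \<Rightarrow> (nat \<Rightarrow> real) \<Rightarrow> nat \<Rightarrow> real" where
  "phi_k n x k = (THE \<phi>. 0 \<le> \<phi> \<and> \<phi> < 2 * pi \<and>
      cos \<phi> = v_k n x k / rho_k n x k \<and> sin \<phi> = vt_k n x k / rho_k n x k)"

definition theta_plus :: "nat \<Rightarrow> (nat \<Rightarrow> real) \<Rightarrow> real" where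
  "theta_plus n x = arctan (sqrt 2 * rho_k n x 1 / v_plus n x)"

definition theta_minus :: "nat \<Rightarrow> (nat \<Rightarrow> real) \<Rightarrow> real" where
  "theta_minus n x = arctan (sqrt 2 * rho_k n x 1 / v_minus n x)"

text \<open>psi n x (k - 1) = psi_{k-1}, tan psi_{k-1} = rho_1 / rho_k.\<close>
definition psi :: "nat \<Rightarrow> (nat \<Rightarrow> real) \<Rightarrow> nat \<Rightarrow> real" where
  "psi n x j = arctan (rho_k n x 1 / rho_k n x (j + 1))"

definition e_tilde :: "nat \<Rightarrow> nat \<Rightarrow> (nat \<Rightarrow> real)" where
  "e_tilde n k = (\<lambda>p. if p < n then 2 / real n * sin (2 * pi * real k * real p / real n) else 0)"

end

theory Submission
  imports Defs
begin

text \<open>With \<open>\<omega> = exp (2 \<pi> i / n)\<close>, the discrete Fourier transform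
  \<open>u \<mapsto> (\<Sum>p. u\<^sub>p \<omega>\<^bsup>kp\<^esup>)\<^sub>k\<close> turns the multiplication of polar n-complex numbers into
  componentwise multiplication and is inverted by the orthogonality of the characters. Hence
  \<open>exp\<close> acts componentwise on spectra, and \<open>u = \<rho> exp E\<close> holds as soon as the k-th spectral
  value of \<open>u\<close> equals \<open>\<rho>\<close> times the exponential of that of \<open>E\<close>, for every k.
  The spectrum of \<open>u\<close> consists of \<open>v\<^sub>+\<close>, \<open>v\<^sub>-\<close> (for even n) and \<open>\<rho>\<^sub>k e\<^bsup>i\<phi>\<^sub>k\<^esup>\<close> with their
  conjugates. The exponent \<open>E\<close> is a real trigonometric polynomial whose spectrum, again by
  orthogonality, is \<open>ln (v\<^sub>\<plusminus>/\<rho>)\<close> and \<open>ln (\<rho>\<^sub>k/\<rho>) + i\<phi>\<^sub>k\<close>: the angles encode the ratios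
  \<open>v\<^sub>\<plusminus>/\<rho>\<^sub>1\<close> and \<open>\<rho>\<^sub>1/\<rho>\<^sub>k\<close>, and setting the zeroth component of \<open>E\<close> to 0 shifts every
  spectral value by one constant, which the choice of \<open>\<rho>\<close> compensates. Both spectra are
  conjugate-symmetric, so only \<open>2k \<le> n\<close> has to be checked.\<close>

section \<open>The discrete Fourier transform\<close>

definition unity_root :: "nat \<Rightarrow> complex" where
  "unity_root n = cis (2 * pi / real n)"

definition dft :: "nat \<Rightarrow> (nat \<Rightarrow> real) \<Rightarrow> nat \<Rightarrow> complex" where
  "dft n u k = (\<Sum>p<n. complex_of_real (u p) * unity_root n ^ (k * p))"

lemma unity_root_pow: "unity_root n ^ j = cis (2 * pi * real j / real n)"
  by (simp add: unity_root_def Complex.DeMoivre mult_ac)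

lemma unity_root_pow_mod:
  assumes "n > 0"
  shows "unity_root n ^ j = unity_root n ^ (j mod n)"
proof -
  have "unity_root n ^ n = 1"
    using assms by (simp add: unity_root_pow)
  then have "unity_root n ^ (n * (j div n)) = 1"
    by (simp add: power_mult)
  then show ?thesis
    by (metis div_mult_mod_eq mult.commute mult_1_left power_add)
qed

lemma unity_root_pow_eq_1_iff:
  assumes n: "n > 0"
  shows "unity_root n ^ j = 1 \<longleftrightarrow> n dvd j"
proof
  assume "unity_root n ^ j = 1"
  then have eq: "cis (2 * pi * real (j mod n) / real n) = cis (2 * pi * real 0 / real n)"
    by (metis unity_root_pow unity_root_pow_mod[OF n] power_0)
  have inj: "inj_on (\<lambda>k. cis (2 * pi * real k / real n)) {..<n}"
    using bij_betw_imp_inj_on[OF Complex.bij_betw_roots_unity[OF n]] .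
  have "j mod n = 0"
    using inj_onD[OF inj eq] n by simp
  then show "n dvd j" by auto
next
  assume "n dvd j"
  then show "unity_root n ^ j = 1"
    using n by (auto simp: unity_root_pow_mod[of n j])
qed

lemma sum_unity_root_pow:
  assumes n: "n > 0"
  shows "(\<Sum>p<n. unity_root n ^ (j * p)) = (if n dvd j then of_nat n else 0)"
proof (cases "n dvd j")
  case True
  then have "unity_root n ^ j = 1"
    using unity_root_pow_eq_1_iff[OF n] by simp
  with True show ?thesis
    by (simp add: power_mult)
next
  case False
  then have "unity_root n ^ j \<noteq> 1" and "(unity_root n ^ j) ^ n = 1"
    using unity_root_pow_eq_1_iff[OF n] by (auto simp flip: power_mult simp: mult.commute)
  then show ?thesis
    using False by (simp add: power_mult geometric_sum)
qed

lemma unity_root_pow_reflect: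
  assumes "j \<le> n"
  shows "unity_root n ^ ((n - j) * p) = cnj (unity_root n ^ (j * p))"
proof (cases "n = 0")
  case False
  have "2 * pi * real ((n - j) * p) / real n = 2 * pi * real p + - (2 * pi * real (j * p) / real n)"
    using assms False by (simp add: of_nat_diff field_simps)
  then have "unity_root n ^ ((n - j) * p) = cis (2 * pi * real p) * cis (- (2 * pi * real (j * p) / real n))"
    by (simp only: unity_root_pow cis_mult)
  also have "cis (2 * pi * real p) = 1"
    by (simp add: complex_eq_iff)
  finally show ?thesis
    by (simp add: unity_root_pow cis_cnj)
qed (use assms in simp)

lemma dvd_iff_eq_if_less_double:
  fixes a n :: nat
  assumes "0 < a" "a < 2 * n"
  shows "n dvd a \<longleftrightarrow> a = n"
proof
  assume "n dvd a"
  then obtain c where c: "a = n * c" ..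
  with assms have "0 < c" "c < 2" by auto
  with c show "a = n" by simp
qed simp

lemma dft_pc_mult:
  assumes n: "n > 0"
  shows "dft n (pc_mult n u w) k = dft n u k * dft n w k"
proof -
  have root: "unity_root n ^ (k * ((j + l) mod n)) = unity_root n ^ (k * j) * unity_root n ^ (k * l)"
    for j l
    using unity_root_pow_mod[OF n, of "k * ((j + l) mod n)"] unity_root_pow_mod[OF n, of "k * (j + l)"]
    by (simp add: mod_mult_right_eq power_add algebra_simps)
  have "dft n (pc_mult n u w) k = (\<Sum>r<n. \<Sum>j<n. \<Sum>l<n.
      if (j + l) mod n = r then complex_of_real (u j * w l) * unity_root n ^ (k * r) else 0)"
    unfolding dft_def pc_mult_def by (simp add: sum_distrib_right if_distrib if_distribR cong: if_cong)
  also have "\<dots> = (\<Sum>j<n. \<Sum>l<n. \<Sum>r<n.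
      if (j + l) mod n = r then complex_of_real (u j * w l) * unity_root n ^ (k * r) else 0)"
    by (subst sum.swap, rule sum.cong[OF refl], rule sum.swap)
  also have "\<dots> = (\<Sum>j<n. \<Sum>l<n. complex_of_real (u j * w l) * unity_root n ^ (k * ((j + l) mod n)))"
    using n by (simp add: sum.delta)
  also have "\<dots> = (\<Sum>j<n. \<Sum>l<n.
      (complex_of_real (u j) * unity_root n ^ (k * j)) * (complex_of_real (w l) * unity_root n ^ (k * l)))"
    by (simp add: root mult_ac)
  also have "\<dots> = dft n u k * dft n w k"
    unfolding dft_def by (simp add: sum_product)
  finally show ?thesis .
qed

lemma dft_pc_one: "n > 0 \<Longrightarrow> dft n pc_one k = 1"
  unfolding dft_def pc_one_def by (simp add: if_distrib if_distribR cong: if_cong)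

lemma dft_pc_pow: "n > 0 \<Longrightarrow> dft n (pc_pow n w j) k = dft n w k ^ j"
  by (induction j) (simp_all add: dft_pc_one dft_pc_mult)

lemma dft_inversion:
  assumes n: "n > 0" and p: "p < n"
  shows "complex_of_real (u p) = (\<Sum>k<n. dft n u k * unity_root n ^ (k * (n - p))) / of_nat n"
proof -
  have orth: "(\<Sum>k<n. unity_root n ^ ((q + (n - p)) * k)) = (if q = p then of_nat n else 0)"
    if "q < n" for q
  proof -
    have "n dvd (q + (n - p)) \<longleftrightarrow> q = p"
      using dvd_iff_eq_if_less_double[of "q + (n - p)" n] that p by auto
    then show ?thesis
      using sum_unity_root_pow[OF n] by simp
  qed
  have "(\<Sum>k<n. dft n u k * unity_root n ^ (k * (n - p)))
      = (\<Sum>k<n. \<Sum>q<n. complex_of_real (u q) * unity_root n ^ ((q + (n - p)) * k))"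
    unfolding dft_def sum_distrib_right by (simp add: power_add algebra_simps)
  also have "\<dots> = (\<Sum>q<n. complex_of_real (u q) * (\<Sum>k<n. unity_root n ^ ((q + (n - p)) * k)))"
    by (subst sum.swap) (simp add: sum_distrib_left)
  also have "\<dots> = (\<Sum>q<n. if q = p then complex_of_real (u q) * of_nat n else 0)"
    by (intro sum.cong refl) (simp add: orth)
  also have "\<dots> = complex_of_real (u p) * of_nat n"
    using p by simp
  finally show ?thesis
    using n by simp
qed

lemma pc_exp_via_dft:
  assumes n: "n > 0" and r: "r < n"
  shows "complex_of_real (pc_exp n E r)
    = (\<Sum>k<n. exp (dft n E k) * unity_root n ^ (k * (n - r))) / of_nat n"
proof -
  let ?f = "\<lambda>j. pc_pow n E j r / fact j"
  have series_term: "complex_of_real (?f j)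
    = (\<Sum>k<n. (dft n E k ^ j /\<^sub>R fact j) * unity_root n ^ (k * (n - r)) / of_nat n)" for j
    by (simp add: dft_inversion[OF n r] dft_pc_pow[OF n] sum_divide_distrib scaleR_conv_of_real field_simps)
  have sums: "(\<lambda>j. complex_of_real (?f j))
      sums (\<Sum>k<n. exp (dft n E k) * unity_root n ^ (k * (n - r)) / of_nat n)"
    unfolding series_term by (intro sums_sum sums_divide sums_mult2 exp_converges)
  then have "summable ?f"
    using sums_summable summable_complex_of_real by blast
  then have "complex_of_real (pc_exp n E r) = (\<Sum>j. complex_of_real (?f j))"
    unfolding pc_exp_def by (rule suminf_of_real)
  also have "\<dots> = (\<Sum>k<n. exp (dft n E k) * unity_root n ^ (k * (n - r)) / of_nat n)"
    using sums by (rule sums_unique[symmetric])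
  finally show ?thesis
    by (simp add: sum_divide_distrib)
qed

lemma pc_eq_scaled_exp_if_dft:
  assumes n: "n > 0" and r: "r < n"
    and spectrum: "\<And>k. k < n \<Longrightarrow> dft n x k = complex_of_real c * exp (dft n E k)"
  shows "x r = c * pc_exp n E r"
proof -
  have "complex_of_real (x r) = (\<Sum>k<n. dft n x k * unity_root n ^ (k * (n - r))) / of_nat n"
    by (rule dft_inversion[OF n r])
  also have "\<dots> = complex_of_real c * ((\<Sum>k<n. exp (dft n E k) * unity_root n ^ (k * (n - r))) / of_nat n)"
    by (simp add: spectrum sum_distrib_left sum_divide_distrib mult.assoc)
  also have "\<dots> = complex_of_real (c * pc_exp n E r)"
    by (simp add: pc_exp_via_dft[OF n r])
  finally show ?thesis
    by (simp only: of_real_eq_iff)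
qed

lemma dft_reflect: "j \<le> n \<Longrightarrow> dft n u (n - j) = cnj (dft n u j)"
  unfolding dft_def by (simp add: unity_root_pow_reflect)

lemma pc_eq_scaled_exp_if_lower_dft:
  assumes n: "n > 0" and r: "r < n"
    and lower: "\<And>k. 2 * k \<le> n \<Longrightarrow> dft n x k = complex_of_real c * exp (dft n E k)"
  shows "x r = c * pc_exp n E r"
proof (rule pc_eq_scaled_exp_if_dft[OF n r])
  fix k assume k: "k < n"
  show "dft n x k = complex_of_real c * exp (dft n E k)"
  proof (cases "2 * k \<le> n")
    case False
    then have reflect: "2 * (n - k) \<le> n" "n - (n - k) = k"
      using k by auto
    have "dft n x k = cnj (dft n x (n - k))"
      using dft_reflect[of "n - k" n x] reflect(2) by simp
    also have "\<dots> = cnj (complex_of_real c * exp (dft n E (n - k)))"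
      using lower[OF reflect(1)] by simp
    also have "\<dots> = complex_of_real c * exp (cnj (dft n E (n - k)))"
      by (simp add: exp_cnj)
    also have "cnj (dft n E (n - k)) = dft n E k"
      using dft_reflect[of "n - k" n E] reflect(2) by simp
    finally show ?thesis .
  qed (rule lower)
qed

lemma dft_add: "dft n (\<lambda>p. f p + g p) k = dft n f k + dft n g k"
  unfolding dft_def by (simp add: sum.distrib algebra_simps)

lemma dft_scale: "dft n (\<lambda>p. c * f p) k = complex_of_real c * dft n f k"
  unfolding dft_def by (simp add: sum_distrib_left mult.assoc)

lemma dft_sum: "dft n (\<lambda>p. \<Sum>j\<in>J. f j p) k = (\<Sum>j\<in>J. dft n (f j) k)"
  unfolding dft_def by (simp add: sum_distrib_right) (rule sum.swap)

lemma dft_cong: "(\<And>p. p < n \<Longrightarrow> f p = g p) \<Longrightarrow> dft n f k = dft n g k"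
  unfolding dft_def by (intro sum.cong refl) auto

lemma dft_clear_zero_sample:
  assumes "n > 0"
  shows "dft n (\<lambda>p. if p = 0 then 0 else f p) k = dft n f k - complex_of_real (f 0)"
proof -
  have "dft n f k = dft n (\<lambda>p. if p = 0 then 0 else f p) k + dft n (\<lambda>p. if p = 0 then f 0 else 0) k"
    by (subst dft_add[symmetric]) (rule dft_cong, simp)
  also have "dft n (\<lambda>p. if p = 0 then f 0 else 0) k = complex_of_real (f 0)"
    unfolding dft_def using assms by (simp add: if_distrib if_distribR cong: if_cong)
  finally show ?thesis
    by simp
qed

lemma dft_const:
  assumes "n > 0" "k < n"
  shows "dft n (\<lambda>p. c) k = (if k = 0 then complex_of_real (real n * c) else 0)"
proof -
  have "n dvd k \<longleftrightarrow> k = 0"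
    using assms by (auto dest: dvd_imp_le)
  then show ?thesis
    unfolding dft_def using sum_unity_root_pow[OF assms(1), of k]
    by (simp add: sum_distrib_left[symmetric] mult.commute)
qed

lemma dft_alternating:
  assumes n: "n > 0" and "even n" and k: "k < n"
  shows "dft n (\<lambda>p. (-1) ^ p) k = (if 2 * k = n then of_nat n else 0)"
proof -
  have "unity_root n ^ (n div 2) = cis pi"
    using assms by (simp add: unity_root_pow real_of_nat_div)
  then have "complex_of_real ((-1) ^ p) = unity_root n ^ (n div 2 * p)" for p
    by (simp add: power_mult)
  then have "dft n (\<lambda>p. (-1) ^ p) k = (\<Sum>p<n. unity_root n ^ ((n div 2 + k) * p))"
    unfolding dft_def by (simp add: algebra_simps power_add)
  moreover have "n dvd (n div 2 + k) \<longleftrightarrow> 2 * k = n"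
    using dvd_iff_eq_if_less_double[of "n div 2 + k" n] assms by auto
  ultimately show ?thesis
    by (simp add: sum_unity_root_pow[OF n])
qed

lemma sum_unity_root_pow_pairs:
  assumes n: "n > 0" and j: "0 < j" "j < n" and k: "k < n"
  shows "(\<Sum>p<n. unity_root n ^ (j * p) * unity_root n ^ (k * p)) = (if j + k = n then of_nat n else 0)"
    and "(\<Sum>p<n. unity_root n ^ ((n - j) * p) * unity_root n ^ (k * p)) = (if j = k then of_nat n else 0)"
proof -
  have pair: "(\<Sum>p<n. unity_root n ^ (i * p) * unity_root n ^ (k * p)) = (if i + k = n then of_nat n else 0)"
    if "0 < i + k" "i + k < 2 * n" for i
  proof -
    have "unity_root n ^ (i * p) * unity_root n ^ (k * p) = unity_root n ^ ((i + k) * p)" for p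
      by (simp add: power_add add_mult_distrib)
    moreover have "n dvd (i + k) \<longleftrightarrow> i + k = n"
      using that by (rule dvd_iff_eq_if_less_double)
    ultimately show ?thesis
      using sum_unity_root_pow[OF n, of "i + k"] by simp
  qed
  show "(\<Sum>p<n. unity_root n ^ (j * p) * unity_root n ^ (k * p)) = (if j + k = n then of_nat n else 0)"
    using pair[of j] j k by simp
  show "(\<Sum>p<n. unity_root n ^ ((n - j) * p) * unity_root n ^ (k * p)) = (if j = k then of_nat n else 0)"
    using pair[of "n - j"] j k by auto
qed

lemma dft_cos:
  assumes n: "n > 0" and j: "0 < j" "j < n" and k: "k < n"
  shows "dft n (\<lambda>p. cos (2 * pi * real j * real p / real n)) k
    = of_nat n / 2 * ((if j = k then 1 else 0) + (if j + k = n then 1 else 0))"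
proof -
  have cos_eq: "complex_of_real (cos (2 * pi * real j * real p / real n))
      = (unity_root n ^ (j * p) + unity_root n ^ ((n - j) * p)) / 2" for p
    using j unfolding unity_root_pow_reflect[of j n, OF less_imp_le[OF j(2)]]
    by (simp add: unity_root_pow cis_cnj complex_eq_iff mult.assoc)
  have "dft n (\<lambda>p. cos (2 * pi * real j * real p / real n)) k
      = (\<Sum>p<n. (unity_root n ^ (j * p) * unity_root n ^ (k * p)
          + unity_root n ^ ((n - j) * p) * unity_root n ^ (k * p)) / 2)"
    unfolding dft_def cos_eq by (intro sum.cong refl) (simp add: algebra_simps)
  also have "\<dots> = ((\<Sum>p<n. unity_root n ^ (j * p) * unity_root n ^ (k * p))
        + (\<Sum>p<n. unity_root n ^ ((n - j) * p) * unity_root n ^ (k * p))) / 2"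
    by (simp only: sum_divide_distrib[symmetric] sum.distrib)
  also have "\<dots> = of_nat n / 2 * ((if j = k then 1 else 0) + (if j + k = n then 1 else 0))"
    by (simp add: sum_unity_root_pow_pairs[OF n j k])
  finally show ?thesis .
qed

lemma dft_sin:
  assumes n: "n > 0" and j: "0 < j" "j < n" and k: "k < n"
  shows "dft n (\<lambda>p. sin (2 * pi * real j * real p / real n)) k
    = \<i> * of_nat n / 2 * ((if j = k then 1 else 0) - (if j + k = n then 1 else 0))"
proof -
  have sin_eq: "complex_of_real (sin (2 * pi * real j * real p / real n))
      = (unity_root n ^ (j * p) - unity_root n ^ ((n - j) * p)) / (2 * \<i>)" for p
    using j unfolding unity_root_pow_reflect[of j n, OF less_imp_le[OF j(2)]]
    by (simp add: unity_root_pow cis_cnj complex_eq_iff mult.assoc)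
  have "dft n (\<lambda>p. sin (2 * pi * real j * real p / real n)) k
      = (\<Sum>p<n. (unity_root n ^ (j * p) * unity_root n ^ (k * p)
          - unity_root n ^ ((n - j) * p) * unity_root n ^ (k * p)) / (2 * \<i>))"
    unfolding dft_def sin_eq by (intro sum.cong refl) (simp add: algebra_simps)
  also have "\<dots> = ((\<Sum>p<n. unity_root n ^ (j * p) * unity_root n ^ (k * p))
        - (\<Sum>p<n. unity_root n ^ ((n - j) * p) * unity_root n ^ (k * p))) / (2 * \<i>)"
    by (simp only: sum_divide_distrib[symmetric] sum_subtractf)
  also have "\<dots> = \<i> * of_nat n / 2 * ((if j = k then 1 else 0) - (if j + k = n then 1 else 0))"
    unfolding sum_unity_root_pow_pairs[OF n j k] by (simp add: field_simps)
  finally show ?thesis .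
qed

lemma dft_trig_poly_lower_half:
  assumes n: "n > 0" and m: "2 * m < n" and k: "2 * k \<le> n" and B: "odd n \<Longrightarrow> B = 0"
  shows "dft n (\<lambda>p. A + B * (-1) ^ p + (\<Sum>j=1..m. C j * cos (2 * pi * real j * real p / real n)
                                             + S j * sin (2 * pi * real j * real p / real n))) k
    = (if k = 0 then complex_of_real (real n * A) else 0)
      + (if 2 * k = n then complex_of_real (real n * B) else 0)
      + (if k \<in> {1..m} then complex_of_real (real n / 2 * C k) + \<i> * complex_of_real (real n / 2 * S k) else 0)"
proof -
  have k_less: "k < n"
    using n k by linarith
  have alternating: "dft n (\<lambda>p. B * (-1) ^ p) k = (if 2 * k = n then complex_of_real (real n * B) else 0)"
  proof (cases "even n")
    case True
    then show ?thesis
      by (simp add: dft_scale dft_alternating[OF n True k_less])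
  next
    case False
    then show ?thesis
      using B by (auto simp: dft_def)
  qed
  have wave: "dft n (\<lambda>p. C j * cos (2 * pi * real j * real p / real n) + S j * sin (2 * pi * real j * real p / real n)) k
      = (if j = k then complex_of_real (real n / 2 * C j) + \<i> * complex_of_real (real n / 2 * S j) else 0)"
    if "j \<in> {1..m}" for j
  proof -
    have j: "0 < j" "j < n" and "j + k \<noteq> n"
      using that m k by auto
    then show ?thesis
      unfolding dft_add dft_scale dft_cos[OF n j k_less] dft_sin[OF n j k_less]
      by (simp add: field_simps)
  qed
  have "dft n (\<lambda>p. \<Sum>j=1..m. C j * cos (2 * pi * real j * real p / real n)
                                + S j * sin (2 * pi * real j * real p / real n)) k
      = (\<Sum>j=1..m. if j = k then complex_of_real (real n / 2 * C j) + \<i> * complex_of_real (real n / 2 * S j) else 0)"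
    unfolding dft_sum by (rule sum.cong[OF refl wave])
  also have "\<dots> = (if k \<in> {1..m} then complex_of_real (real n / 2 * C k) + \<i> * complex_of_real (real n / 2 * S k) else 0)"
    by (rule sum.delta[OF finite_atLeastAtMost])
  finally show ?thesis
    by (simp add: dft_add dft_const[OF n k_less] alternating)
qed

section \<open>Spectrum of a polar n-complex number\<close>

lemma dft_eq_Complex: "dft n x k = Complex (v_k n x k) (vt_k n x k)"
  unfolding dft_def v_k_def vt_k_def by (simp add: complex_eq_iff unity_root_pow mult.assoc)

lemma dft_zero_eq_v_plus: "dft n x 0 = complex_of_real (v_plus n x)"
  unfolding dft_def v_plus_def by simp

lemma dft_half_eq_v_minus:
  assumes "even n"
  shows "dft n x (n div 2) = complex_of_real (v_minus n x)"
proof -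
  have "unity_root n ^ (n div 2 * p) = (-1) ^ p" if "p < n" for p
    using assms that by (simp add: unity_root_pow real_of_nat_div complex_eq_iff)
  then show ?thesis
    unfolding dft_def v_minus_def of_real_sum by (intro sum.cong) (simp_all add: mult.commute)
qed

lemma norm_dft_eq_rho_k: "cmod (dft n x k) = rho_k n x k"
  by (simp add: dft_eq_Complex rho_k_def complex_norm)

lemma phi_k_eq_Arg2pi:
  assumes "rho_k n x k > 0"
  shows "phi_k n x k = Arg2pi (dft n x k)"
  unfolding phi_k_def
proof (rule the_equality)
  let ?z = "dft n x k"
  have "Re ?z = v_k n x k" "Im ?z = vt_k n x k"
    by (simp_all add: dft_eq_Complex)
  then have "rho_k n x k * cos (Arg2pi ?z) = v_k n x k" "rho_k n x k * sin (Arg2pi ?z) = vt_k n x k"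
    using cos_Arg2pi[of ?z] sin_Arg2pi[of ?z] by (simp_all only: norm_dft_eq_rho_k)
  then show "0 \<le> Arg2pi ?z \<and> Arg2pi ?z < 2 * pi
      \<and> cos (Arg2pi ?z) = v_k n x k / rho_k n x k \<and> sin (Arg2pi ?z) = vt_k n x k / rho_k n x k"
    using Arg2pi[of ?z] assms by (simp add: field_simps)
next
  fix \<phi> assume \<phi>: "0 \<le> \<phi> \<and> \<phi> < 2 * pi
      \<and> cos \<phi> = v_k n x k / rho_k n x k \<and> sin \<phi> = vt_k n x k / rho_k n x k"
  then have "complex_of_real (rho_k n x k) * exp (\<i> * complex_of_real \<phi>) = dft n x k"
    using assms by (simp add: dft_eq_Complex complex_eq_iff Re_exp Im_exp)
  then show "\<phi> = Arg2pi (dft n x k)"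
    using assms \<phi> by (simp add: Arg2pi_unique)
qed

lemma dft_eq_rho_k_cis_phi_k:
  assumes "rho_k n x k > 0"
  shows "dft n x k = complex_of_real (rho_k n x k) * cis (phi_k n x k)"
  using Arg2pi_eq[of "dft n x k"] by (simp add: phi_k_eq_Arg2pi[OF assms] norm_dft_eq_rho_k cis_conv_exp)

section \<open>The exponential form\<close>

lemma ln_sqrt2_div_tan_arctan:
  assumes "a > 0" "r > 0"
  shows "ln (sqrt 2 / tan (arctan (sqrt 2 * r / a))) = ln a - ln r"
proof -
  have "sqrt 2 / tan (arctan (sqrt 2 * r / a)) = a / r"
    using assms by (simp add: tan_arctan)
  then show ?thesis
    using assms by (simp add: ln_div)
qed

lemma ln_tan_arctan_div:
  assumes "r > 0" "s > 0"
  shows "ln (tan (arctan (r / s))) = ln r - ln s"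
  using assms by (simp add: tan_arctan ln_div)

lemma scaled_exp_log_polar:
  assumes "R > 0" "s > 0"
  shows "complex_of_real R * exp (complex_of_real (ln s - ln R) + \<i> * complex_of_real \<phi>)
    = complex_of_real s * cis \<phi>"
proof -
  have "exp (complex_of_real t + \<i> * complex_of_real \<phi>) = complex_of_real (exp t) * cis \<phi>" for t
    by (simp add: exp_add cis_conv_exp exp_of_real mult.commute)
  moreover have "exp (ln s - ln R) = s / R"
    using assms by (simp add: exp_diff)
  ultimately show ?thesis
    using assms by (simp del: of_real_diff)
qed

lemma root_prod_squares:
  fixes r :: "nat \<Rightarrow> real"
  assumes "a > 0" "b > 0" "finite K" "\<And>k. k \<in> K \<Longrightarrow> r k > 0"
  shows "(a * b * (\<Prod>k\<in>K. (r k)\<^sup>2)) powr (1 / real n) > 0"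
    and "ln ((a * b * (\<Prod>k\<in>K. (r k)\<^sup>2)) powr (1 / real n))
      = (ln a + ln b + 2 * (\<Sum>k\<in>K. ln (r k))) / real n"
proof -
  have "ln (\<Prod>k\<in>K. (r k)\<^sup>2) = (\<Sum>k\<in>K. ln ((r k)\<^sup>2))"
    using assms(3) by (intro ln_prod) (auto dest!: assms(4))
  also have "\<dots> = 2 * (\<Sum>k\<in>K. ln (r k))"
    using assms(4) by (simp add: ln_realpow sum_distrib_left)
  finally have "ln (\<Prod>k\<in>K. (r k)\<^sup>2) = 2 * (\<Sum>k\<in>K. ln (r k))" .
  moreover have "(\<Prod>k\<in>K. (r k)\<^sup>2) > 0"
    by (intro prod_pos) (auto dest!: assms(4))
  ultimately show "(a * b * (\<Prod>k\<in>K. (r k)\<^sup>2)) powr (1 / real n) > 0"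
    and "ln ((a * b * (\<Prod>k\<in>K. (r k)\<^sup>2)) powr (1 / real n))
      = (ln a + ln b + 2 * (\<Sum>k\<in>K. ln (r k))) / real n"
    using assms(1,2) by (simp_all add: ln_powr ln_mult)
qed

lemma dft_exponent_lower_half:
  fixes n m k :: nat and E r \<phi> :: "nat \<Rightarrow> real" and a b R :: real
  assumes m: "m = (n - 1) div 2" "1 \<le> m"
    and ln_R: "ln R = (ln a + (if even n then ln b else 0) + 2 * (\<Sum>j=1..m. ln (r j))) / real n"
    and E: "\<And>p. p < n \<Longrightarrow> E p = (if p = 0 then 0 else
              (ln a - ln (r 1)) / real n + (if even n then (ln b - ln (r 1)) / real n else 0) * (-1) ^ p
            + (\<Sum>j=1..m. 2 / real n * (ln (r j) - ln (r 1)) * cos (2 * pi * real j * real p / real n)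
                       + 2 / real n * \<phi> j * sin (2 * pi * real j * real p / real n)))"
  shows "dft n E 0 = complex_of_real (ln a - ln R)"
    and "k \<in> {1..m} \<Longrightarrow> dft n E k = complex_of_real (ln (r k) - ln R) + \<i> * complex_of_real (\<phi> k)"
    and "even n \<Longrightarrow> dft n E (n div 2) = complex_of_real (ln b - ln R)"
proof -
  define A where "A = (ln a - ln (r 1)) / real n"
  define B where "B = (if even n then (ln b - ln (r 1)) / real n else 0)"
  define C where "C j = 2 / real n * (ln (r j) - ln (r 1))" for j
  define S where "S j = 2 / real n * \<phi> j" for j
  define G where "G p = A + B * (-1) ^ p + (\<Sum>j=1..m. C j * cos (2 * pi * real j * real p / real n)
                                            + S j * sin (2 * pi * real j * real p / real n))" for p
  have n: "n > 0" "2 * m < n" and n_parity: "even n \<Longrightarrow> n = 2 + 2 * m" "odd n \<Longrightarrow> n = 1 + 2 * m"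
    using m by presburger+
  then have n_eq: "real n = 1 + (if even n then 1 else 0) + 2 * real m"
    by (cases "even n") simp_all
  have sum_C: "(\<Sum>j=1..m. C j) = 2 / real n * ((\<Sum>j=1..m. ln (r j)) - real m * ln (r 1))"
    unfolding C_def sum_distrib_left[symmetric] by (simp add: sum_subtractf)
  have G_zero_eq: "G 0 = A + B + (\<Sum>j=1..m. C j)"
    by (simp add: G_def)
  have "real n * G 0 = ln a + (if even n then ln b else 0) + 2 * (\<Sum>j=1..m. ln (r j))
      - (1 + (if even n then 1 else 0) + 2 * real m) * ln (r 1)"
    using n(1) unfolding G_zero_eq sum_C A_def B_def by (cases "even n") (simp_all add: field_simps)
  also have "\<dots> = real n * (ln R - ln (r 1))"
    using n(1) unfolding ln_R n_eq[symmetric] by (simp add: field_simps)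
  finally have G_zero: "G 0 = ln R - ln (r 1)"
    using n(1) by simp
  have "dft n E k = dft n (\<lambda>p. if p = 0 then 0 else G p) k" for k
    by (rule dft_cong) (simp add: E G_def A_def B_def C_def S_def mult.assoc)
  then have dft_E: "dft n E k = dft n G k - complex_of_real (ln R - ln (r 1))" for k
    by (simp add: dft_clear_zero_sample[OF n(1)] G_zero)
  have dft_G: "dft n G k = (if k = 0 then complex_of_real (real n * A) else 0)
      + (if 2 * k = n then complex_of_real (real n * B) else 0)
      + (if k \<in> {1..m} then complex_of_real (real n / 2 * C k) + \<i> * complex_of_real (real n / 2 * S k) else 0)"
    if "2 * k \<le> n" for k
    unfolding G_def using n that by (intro dft_trig_poly_lower_half) (auto simp: B_def)
  show "dft n E 0 = complex_of_real (ln a - ln R)"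
  proof -
    have "dft n G 0 = complex_of_real (real n * A)"
      using dft_G[of 0] n by simp
    also have "real n * A = ln a - ln (r 1)"
      using n(1) by (simp add: A_def)
    finally show ?thesis
      by (simp add: dft_E)
  qed
  show "dft n E k = complex_of_real (ln (r k) - ln R) + \<i> * complex_of_real (\<phi> k)" if "k \<in> {1..m}"
  proof -
    have "dft n G k = complex_of_real (real n / 2 * C k) + \<i> * complex_of_real (real n / 2 * S k)"
      using dft_G[of k] that n by auto
    also have "real n / 2 * C k = ln (r k) - ln (r 1)"
      using n(1) by (simp add: C_def)
    also have "real n / 2 * S k = \<phi> k"
      using n(1) by (simp add: S_def)
    finally show ?thesis
      by (simp add: dft_E)
  qed
  show "dft n E (n div 2) = complex_of_real (ln b - ln R)" if "even n"
  proof -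
    have "dft n G (n div 2) = complex_of_real (real n * B)"
      using dft_G[of "n div 2"] that n_parity by simp
    also have "real n * B = ln b - ln (r 1)"
      using n(1) that by (simp add: B_def)
    finally show ?thesis
      by (simp add: dft_E)
  qed
qed

lemma pc_exp_form_from_spectrum:
  fixes n m q :: nat and x E r \<phi> :: "nat \<Rightarrow> real" and a b R :: real
  assumes m: "m = (n - 1) div 2" "1 \<le> m"
    and x_zero: "dft n x 0 = complex_of_real a" and a: "a > 0"
    and x_half: "even n \<Longrightarrow> dft n x (n div 2) = complex_of_real b" and b: "even n \<Longrightarrow> b > 0"
    and x_low: "\<And>k. k \<in> {1..m} \<Longrightarrow> dft n x k = complex_of_real (r k) * cis (\<phi> k)"
    and r: "\<And>k. k \<in> {1..m} \<Longrightarrow> r k > 0"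
    and R: "R = (a * (if even n then b else 1) * (\<Prod>k=1..m. (r k)\<^sup>2)) powr (1 / real n)"
    and E: "\<And>p. p < n \<Longrightarrow> E p = (if p = 0 then 0 else
              (ln a - ln (r 1)) / real n + (if even n then (ln b - ln (r 1)) / real n else 0) * (-1) ^ p
            + (\<Sum>j=1..m. 2 / real n * (ln (r j) - ln (r 1)) * cos (2 * pi * real j * real p / real n)
                       + 2 / real n * \<phi> j * sin (2 * pi * real j * real p / real n)))"
    and q: "q < n"
  shows "x q = R * pc_exp n E q"
proof -
  have "(if even n then b else 1) > 0"
    using b by simp
  note root = root_prod_squares[of a _ "{1..m}" r n, OF a this finite_atLeastAtMost r]
  have R_pos: "R > 0"
    using root(1) unfolding R .
  have ln_R: "ln R = (ln a + (if even n then ln b else 0) + 2 * (\<Sum>j=1..m. ln (r j))) / real n"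
    using root(2) unfolding R by (cases "even n") simp_all
  have polar: "dft n x k = complex_of_real R * exp (dft n E k)"
    if "dft n x k = complex_of_real s * cis \<psi>" "dft n E k = complex_of_real (ln s - ln R) + \<i> * complex_of_real \<psi>"
      "s > 0" for k s \<psi>
    using that scaled_exp_log_polar[OF R_pos] by simp
  show ?thesis
  proof (rule pc_eq_scaled_exp_if_lower_dft[OF _ q])
    fix k assume k: "2 * k \<le> n"
    have "k = 0 \<or> k \<in> {1..m} \<or> even n \<and> 2 * k = n"
      using k m by (cases "even n") (auto, presburger+)
    then consider "k = 0" | "k \<in> {1..m}" | "even n" "2 * k = n"
      by blast
    then show "dft n x k = complex_of_real R * exp (dft n E k)"
    proof cases
      case 1
      have "dft n x k = complex_of_real a * cis 0"
        using 1 x_zero by simp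
      moreover have "dft n E k = complex_of_real (ln a - ln R) + \<i> * complex_of_real 0"
        using 1 dft_exponent_lower_half(1)[OF m ln_R E] by simp
      ultimately show ?thesis
        using a by (rule polar)
    next
      case 2
      from x_low[OF 2] dft_exponent_lower_half(2)[OF m ln_R E 2] show ?thesis
        using r[OF 2] by (rule polar)
    next
      case 3
      have "dft n x k = complex_of_real b * cis 0"
        using 3 x_half by auto
      moreover have "dft n E k = complex_of_real (ln b - ln R) + \<i> * complex_of_real 0"
        using 3 dft_exponent_lower_half(3)[OF m ln_R E] by auto
      ultimately show ?thesis
        using b[OF 3(1)] by (rule polar)
    qed
  qed (use q in simp)
qed

lemma sum_cos_ln_tan_psi:
  assumes m: "1 \<le> m" and rho_pos: "\<And>k. k \<in> {1..m} \<Longrightarrow> rho_k n x k > 0"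
  shows "2 / real n * (\<Sum>k=2..m. cos (2 * pi * real k * real p / real n) * ln (tan (psi n x (k - 1))))
    = - (\<Sum>k=1..m. 2 / real n * (ln (rho_k n x k) - ln (rho_k n x 1)) * cos (2 * pi * real k * real p / real n))"
proof -
  have "2 / real n * (cos (2 * pi * real k * real p / real n) * ln (tan (psi n x (k - 1))))
      = - (2 / real n * (ln (rho_k n x k) - ln (rho_k n x 1)) * cos (2 * pi * real k * real p / real n))"
    if "k \<in> {2..m}" for k
  proof -
    have tan_psi: "ln (tan (psi n x (k - 1))) = ln (rho_k n x 1) - ln (rho_k n x k)"
      using that m rho_pos[of 1] rho_pos[of k] unfolding psi_def by (simp add: ln_tan_arctan_div)
    show ?thesis
      unfolding tan_psi by (simp add: algebra_simps)
  qed
  then have "2 / real n * (\<Sum>k=2..m. cos (2 * pi * real k * real p / real n) * ln (tan (psi n x (k - 1))))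
      = (\<Sum>k=2..m. - (2 / real n * (ln (rho_k n x k) - ln (rho_k n x 1)) * cos (2 * pi * real k * real p / real n)))"
    unfolding sum_distrib_left by (rule sum.cong[OF refl])
  moreover have "{1..m} = insert 1 {2..m}"
    using m by auto
  ultimately show ?thesis
    by (simp add: sum_negf)
qed

lemma pc_exp_form_canonical:
  fixes n q :: nat and x E :: "nat \<Rightarrow> real" and R :: real
  assumes n3: "n \<ge> 3"
    and vp: "v_plus n x > 0"
    and vm: "even n \<Longrightarrow> v_minus n x > 0"
    and rk: "\<And>k. 1 \<le> k \<Longrightarrow> k \<le> (n - 1) div 2 \<Longrightarrow> rho_k n x k > 0"
    and R: "R = (v_plus n x * (if even n then v_minus n x else 1)
                 * (\<Prod>k=1..(n - 1) div 2. (rho_k n x k)\<^sup>2)) powr (1 / real n)"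
    and E_zero: "E 0 = 0"
    and E: "\<And>p. 1 \<le> p \<Longrightarrow> p < n \<Longrightarrow> E p =
              1 / real n * ln (sqrt 2 / tan (theta_plus n x))
            + (if even n then (-1) ^ p / real n * ln (sqrt 2 / tan (theta_minus n x)) else 0)
            - 2 / real n * (\<Sum>k=2..(n - 1) div 2.
                 cos (2 * pi * real k * real p / real n) * ln (tan (psi n x (k - 1))))
            + (\<Sum>k=1..(n - 1) div 2. e_tilde n k p * phi_k n x k)"
    and q: "q < n"
  shows "x q = R * pc_exp n E q"
proof -
  define m where "m = (n - 1) div 2"
  have m_pos: "1 \<le> m"
    using n3 unfolding m_def by presburger
  have rho_pos: "rho_k n x k > 0" if "k \<in> {1..m}" for k
    using rk that by (simp add: m_def)
  have rho1: "rho_k n x 1 > 0"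
    using rho_pos m_pos by simp
  have cos_part: "2 / real n * (\<Sum>k=2..m. cos (2 * pi * real k * real p / real n) * ln (tan (psi n x (k - 1))))
    = - (\<Sum>k=1..m. 2 / real n * (ln (rho_k n x k) - ln (rho_k n x 1)) * cos (2 * pi * real k * real p / real n))"
    for p
    using m_pos rho_pos by (rule sum_cos_ln_tan_psi)
  show ?thesis
  proof (rule pc_exp_form_from_spectrum[OF m_def m_pos dft_zero_eq_v_plus vp dft_half_eq_v_minus vm
        dft_eq_rho_k_cis_phi_k[OF rho_pos] rho_pos _ _ q])
    show "R = (v_plus n x * (if even n then v_minus n x else 1) * (\<Prod>k=1..m. (rho_k n x k)\<^sup>2)) powr (1 / real n)"
      unfolding R m_def ..
  next
    fix p assume p: "p < n"
    show "E p = (if p = 0 then 0 else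
              (ln (v_plus n x) - ln (rho_k n x 1)) / real n
            + (if even n then (ln (v_minus n x) - ln (rho_k n x 1)) / real n else 0) * (-1) ^ p
            + (\<Sum>j=1..m. 2 / real n * (ln (rho_k n x j) - ln (rho_k n x 1)) * cos (2 * pi * real j * real p / real n)
                       + 2 / real n * phi_k n x j * sin (2 * pi * real j * real p / real n)))"
    proof (cases "p = 0")
      case False
      then have "1 \<le> p"
        by simp
      have plus: "ln (sqrt 2 / tan (theta_plus n x)) = ln (v_plus n x) - ln (rho_k n x 1)"
        unfolding theta_plus_def using vp rho1 by (rule ln_sqrt2_div_tan_arctan)
      have minus: "(if even n then (-1) ^ p / real n * ln (sqrt 2 / tan (theta_minus n x)) else 0)
          = (if even n then (ln (v_minus n x) - ln (rho_k n x 1)) / real n else 0) * (-1) ^ p"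
        unfolding theta_minus_def using vm rho1 by (simp add: ln_sqrt2_div_tan_arctan)
      have sin_part: "(\<Sum>k=1..m. e_tilde n k p * phi_k n x k)
          = (\<Sum>k=1..m. 2 / real n * phi_k n x k * sin (2 * pi * real k * real p / real n))"
        using p by (simp add: e_tilde_def mult_ac)
      show ?thesis
        using False unfolding E[OF \<open>1 \<le> p\<close> p] plus minus m_def[symmetric] cos_part sin_part sum.distrib
        by (simp add: algebra_simps diff_divide_distrib)
    qed (simp add: E_zero)
  qed
qed

theorem mainTheorem10:
  fixes n :: nat and x :: "nat \<Rightarrow> real"
  assumes n3: "n \<ge> 3"
    and vp: "v_plus n x > 0"
    and vm: "even n \<Longrightarrow> v_minus n x > 0"
    and rk: "\<And>k. 1 \<le> k \<Longrightarrow> k \<le> (n - 1) div 2 \<Longrightarrow> rho_k n x k > 0"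
  shows
   "(even n \<longrightarrow>
      (let \<rho> = (v_plus n x * v_minus n x * (\<Prod>k=1..n div 2 - 1. (rho_k n x k)\<^sup>2)) powr (1 / real n);
           E = (\<lambda>p. (if 1 \<le> p \<and> p < n then
                   1 / real n * ln (sqrt 2 / tan (theta_plus n x))
                 + (-1) ^ p / real n * ln (sqrt 2 / tan (theta_minus n x))
                 - 2 / real n * (\<Sum>k=2..n div 2 - 1.
                      cos (2 * pi * real k * real p / real n) * ln (tan (psi n x (k - 1))))
                 else 0)
               + (\<Sum>k=1..n div 2 - 1. e_tilde n k p * phi_k n x k))
       in \<forall>r<n. x r = \<rho> * pc_exp n E r))
  \<and> (odd n \<longrightarrow>
      (let \<rho> = (v_plus n x * (\<Prod>k=1..(n - 1) div 2. (rho_k n x k)\<^sup>2)) powr (1 / real n);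
           E = (\<lambda>p. (if 1 \<le> p \<and> p < n then
                   1 / real n * ln (sqrt 2 / tan (theta_plus n x))
                 - 2 / real n * (\<Sum>k=2..(n - 1) div 2.
                      cos (2 * pi * real k * real p / real n) * ln (tan (psi n x (k - 1))))
                 else 0)
               + (\<Sum>k=1..(n - 1) div 2. e_tilde n k p * phi_k n x k))
       in \<forall>r<n. x r = \<rho> * pc_exp n E r))"
proof -
  have half: "even n \<Longrightarrow> n div 2 - Suc 0 = (n - Suc 0) div 2"
    by presburger
  show ?thesis
    unfolding Let_def
    by (intro conjI impI allI; rule pc_exp_form_canonical[OF n3 vp vm rk]) (auto simp: half e_tilde_def)
qed

end
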